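(* There is a constant $C_n>0$ depending only on $n$ such that: if $Z:\mathbb{T}^d\to Gl(n,\mathbb{C})$ (continuous) satisfies $\left|\int_{\mathbb{T}^d}\det Z(\theta)\,d\theta\right|=1$, then there exists $\lambda\in[-1,1]$ such that $$\left|\int_{\mathbb{T}^d}\det\big(\Re Z(\theta)+\lambda\Im Z(\theta)\big)\,d\theta\right|\ge C_n.$$
   Context: $\mathbb{T}^d=\mathbb{R}^d/\mathbb{Z}^d$ with Haar (Lebesgue) measure; $\Re Z$ and $\Im Z$ are the entrywise real and imaginary parts of $Z$. *)

theory Defs
  imports "HOL-Analysis.Analysis"
begin

text \<open>Haar (Lebesgue) probability measure on the torus T^d = R^d / Z^d, realised on the
fundamental domain [0,1]^d, points being (extensional) functions {..<d} -> real.\<close>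
definition torus_measure :: "nat \<Rightarrow> (nat \<Rightarrow> real) measure" where
  "torus_measure d = PiM {..<d} (\<lambda>_. restrict_space lborel {0..1::real})"

text \<open>A continuous map T^d -> X, i.e. a continuous function on R^d (points as extensional
functions {..<d} -> real, product topology) that is 1-periodic in every coordinate.\<close>
definition torus_continuous :: "nat \<Rightarrow> ((nat \<Rightarrow> real) \<Rightarrow> 'a::topological_space) \<Rightarrow> bool" where
  "torus_continuous d Z \<longleftrightarrow>
     continuous_on (PiE {..<d} (\<lambda>_. UNIV)) Z \<and>
     (\<forall>\<theta>\<in>PiE {..<d} (\<lambda>_. UNIV). \<forall>i<d. Z (\<theta>(i := \<theta> i + 1)) = Z \<theta>)"

definition Re_mat :: "complex^'n^'m \<Rightarrow> real^'n^'m" where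
  "Re_mat A = (\<chi> i j. Re (A $ i $ j))"

definition Im_mat :: "complex^'n^'m \<Rightarrow> real^'n^'m" where
  "Im_mat A = (\<chi> i j. Im (A $ i $ j))"

end

theory Submission
  imports Defs "HOL-Computational_Algebra.Polynomial" "HOL-Probability.Infinite_Product_Measure"
begin

text \<open>For a fixed complex matrix \<open>Z\<close>, \<open>\<lambda> \<mapsto> det (Re Z + \<lambda> Im Z)\<close> is a polynomial of degree at
most \<open>n\<close> whose value at \<open>\<lambda> = \<i>\<close> is \<open>det Z\<close>. Lagrange interpolation at \<open>n + 1\<close> fixed real
nodes in \<open>[0, 1]\<close> writes \<open>det Z\<close> as a linear combination of the values at the nodes, with
coefficients depending only on \<open>n\<close>. Integrating over the torus and applying the triangle
inequality, one of the \<open>n + 1\<close> real integrals has absolute value at least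
\<open>1 / (1 + \<Sum> |coefficients|)\<close>.\<close>

lemma compact_PiE:
  fixes S :: "'a \<Rightarrow> 'b::topological_space set"
  assumes "\<And>i. i \<in> I \<Longrightarrow> compact (S i)"
  shows "compact (PiE I S)"
proof -
  have "PiE I S = PiE UNIV (\<lambda>i. if i \<in> I then S i else {undefined})"
    by (auto simp: PiE_iff extensional_def split: if_splits)
  moreover have "compactin (product_topology (\<lambda>_. euclidean) UNIV)
      (PiE UNIV (\<lambda>i. if i \<in> I then S i else {undefined}))"
    by (subst compactin_PiE) (auto simp: assms)
  ultimately show ?thesis
    by (simp add: euclidean_product_topology)
qed

lemma space_torus_measure: "space (torus_measure d) = PiE {..<d} (\<lambda>_. {0..1})"
  by (simp add: torus_measure_def space_PiM space_restrict_space)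

lemma prob_space_torus_measure: "prob_space (torus_measure d)"
  unfolding torus_measure_def by (intro prob_space_PiM prob_space_restrict_space) auto

lemma borel_measurable_torus_measure_coordinate: "(\<lambda>\<theta>. \<theta> i) \<in> borel_measurable (torus_measure d)"
proof (cases "i < d")
  case True
  have "(\<lambda>\<theta>. \<theta> i) \<in> measurable (torus_measure d) (restrict_space lborel {0..1})"
    unfolding torus_measure_def using True by (intro measurable_component_singleton) auto
  then show ?thesis
    by (rule measurable_compose) (intro measurable_restrict_space1 measurable_ident_sets, simp)
next
  case False
  then have "\<theta> i = undefined" if "\<theta> \<in> space (torus_measure d)" for \<theta>
    using that by (auto simp: space_torus_measure PiE_iff extensional_def)
  then show ?thesis
    by (subst measurable_cong[where g = "\<lambda>_. undefined"]) auto
qed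

lemma borel_measurable_torus_measure_id: "(\<lambda>\<theta>. \<theta>) \<in> borel_measurable (torus_measure d)"
  by (rule measurable_coordinatewise_then_product) (rule borel_measurable_torus_measure_coordinate)

lemma integrable_torus_measure_continuous:
  fixes g :: "(nat \<Rightarrow> real) \<Rightarrow> 'b::{banach, second_countable_topology}"
  assumes "continuous_on (PiE {..<d} (\<lambda>_. UNIV)) g"
  shows "integrable (torus_measure d) g"
proof -
  interpret prob_space "torus_measure d"
    by (rule prob_space_torus_measure)
  have "continuous_on UNIV (\<lambda>\<theta>::nat \<Rightarrow> real. restrict \<theta> {..<d} i)" for i
    by (cases "i < d") simp_all
  then have "continuous_on UNIV (\<lambda>\<theta>::nat \<Rightarrow> real. restrict \<theta> {..<d})"
    by (rule continuous_on_coordinatewise_then_product)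
  moreover have "(\<lambda>\<theta>. restrict \<theta> {..<d}) ` UNIV \<subseteq> PiE {..<d} (\<lambda>_. UNIV)"
    by (simp add: image_subset_iff)
  ultimately have "continuous_on UNIV (\<lambda>\<theta>. g (restrict \<theta> {..<d}))"
    by (rule continuous_on_compose2[OF assms])
  then have "(\<lambda>\<theta>. g (restrict \<theta> {..<d})) \<in> borel_measurable borel"
    by (rule borel_measurable_continuous_onI)
  with borel_measurable_torus_measure_id
  have "(\<lambda>\<theta>. g (restrict \<theta> {..<d})) \<in> borel_measurable (torus_measure d)"
    by (rule measurable_compose)
  then have "g \<in> borel_measurable (torus_measure d)"
    by (rule measurable_cong[THEN iffD1, rotated]) (auto simp: space_torus_measure PiE_def)
  moreover have "compact (g ` PiE {..<d} (\<lambda>_. {0..1}))"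
    by (intro compact_continuous_image continuous_on_subset[OF assms] compact_PiE) auto
  then obtain B where "\<forall>y \<in> g ` PiE {..<d} (\<lambda>_. {0..1}). norm y \<le> B"
    using compact_imp_bounded bounded_iff by metis
  ultimately show ?thesis
    by (intro integrable_const_bound[where B = B]) (auto simp: space_torus_measure)
qed

lemma integrable_torus_measure_det_Re_Im:
  assumes "torus_continuous d Z"
  shows "integrable (torus_measure d) (\<lambda>\<theta>. det (Re_mat (Z \<theta>) + t *\<^sub>R Im_mat (Z \<theta>)))"
proof -
  have "continuous_on (PiE {..<d} (\<lambda>_. UNIV)) Z"
    using assms by (simp add: torus_continuous_def)
  then show ?thesis
    unfolding det_def Re_mat_def Im_mat_def
    by (intro integrable_torus_measure_continuous) (simp add: continuous_intros)
qed

definition lagrange_basis :: "'a::field set \<Rightarrow> 'a \<Rightarrow> 'a poly" where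
  "lagrange_basis X x = (\<Prod>y\<in>X - {x}. smult (1 / (x - y)) [:- y, 1:])"

lemma degree_lagrange_basis:
  assumes "finite X"
  shows "degree (lagrange_basis X x) \<le> card (X - {x})"
proof -
  have "degree (lagrange_basis X x) \<le> (\<Sum>y\<in>X - {x}. degree (smult (1 / (x - y)) [:- y, 1:]))"
    unfolding lagrange_basis_def
    using assms by (rule degree_prod_sum_le[OF finite_Diff, unfolded comp_def])
  also have "\<dots> \<le> (\<Sum>y\<in>X - {x}. 1)"
    by (intro sum_mono) (auto intro: order.trans[OF degree_smult_le])
  finally show ?thesis by simp
qed

lemma poly_lagrange_basis:
  assumes "finite X" "x \<in> X" "y \<in> X"
  shows "poly (lagrange_basis X x) y = (if y = x then 1 else 0)"
proof -
  have "poly (lagrange_basis X x) y = (\<Prod>z\<in>X - {x}. (y - z) / (x - z))"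
    unfolding lagrange_basis_def poly_prod by (intro prod.cong) (simp_all add: divide_inverse algebra_simps)
  then show ?thesis
    using assms by (auto intro!: prod_zero)
qed

lemma lagrange_interpolation:
  fixes q :: "'a::field poly"
  assumes "finite X" "degree q < card X"
  shows "poly q z = (\<Sum>x\<in>X. poly q x * poly (lagrange_basis X x) z)"
proof -
  define L where "L = (\<Sum>x\<in>X. smult (poly q x) (lagrange_basis X x))"
  have deg: "degree (smult (poly q x) (lagrange_basis X x)) \<le> card X - 1" if "x \<in> X" for x
    using degree_lagrange_basis[OF assms(1), of x] that assms(1)
    by (auto intro: order.trans[OF degree_smult_le])
  have "degree L \<le> card X - 1"
    unfolding L_def by (intro degree_sum_le assms(1) deg)
  then have "degree L < card X"
    using assms(2) by linarith
  moreover have "poly q y = poly L y" if "y \<in> X" for y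
    using that assms(1) by (simp add: L_def poly_sum poly_lagrange_basis if_distrib cong: if_cong)
  ultimately have "q = L"
    using assms(2) by (intro poly_eqI_degree) auto
  then have "poly q z = poly L z"
    by (rule arg_cong)
  then show ?thesis
    unfolding L_def poly_sum poly_smult .
qed

definition pencil_poly :: "real^'n^'n \<Rightarrow> real^'n^'n \<Rightarrow> 'a::{real_algebra_1, comm_ring_1} poly" where
  "pencil_poly A B = (\<Sum>p | p permutes (UNIV::'n set). smult (of_int (sign p))
      (\<Prod>i\<in>UNIV. [:of_real (A $ i $ p i), of_real (B $ i $ p i):]))"

lemma poly_pencil_poly:
  "poly (pencil_poly A B) z = det (\<chi> i j. of_real (A $ i $ j) + z * of_real (B $ i $ j))"
  unfolding pencil_poly_def det_def poly_sum poly_smult poly_prod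
  by (simp add: algebra_simps)

lemma degree_pencil_poly:
  fixes A B :: "real^'n^'n"
  shows "degree (pencil_poly A B :: 'a::{real_algebra_1, comm_ring_1} poly) \<le> CARD('n)"
  unfolding pencil_poly_def
proof (intro degree_sum_le finite_subset[OF subset_UNIV finite])
  fix p :: "'n \<Rightarrow> 'n"
  have "degree (\<Prod>i\<in>UNIV. [:of_real (A $ i $ p i), of_real (B $ i $ p i):] :: 'a poly)
      \<le> (\<Sum>i\<in>UNIV. degree ([:of_real (A $ i $ p i), of_real (B $ i $ p i):] :: 'a poly))"
    by (rule degree_prod_sum_le[OF finite, unfolded comp_def])
  also have "\<dots> \<le> (\<Sum>i\<in>(UNIV::'n set). 1)"
    by (intro sum_mono) (simp add: degree_pCons_le)
  finally show "degree (smult (of_int (sign p))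
      (\<Prod>i\<in>UNIV. [:of_real (A $ i $ p i), of_real (B $ i $ p i):] :: 'a poly)) \<le> CARD('n)"
    by (simp add: order.trans[OF degree_smult_le])
qed

lemma of_real_det:
  "of_real (det A) = (det (\<chi> i j. of_real (A $ i $ j)) :: 'a::{real_algebra_1, comm_ring_1})"
  unfolding det_def by simp

lemma poly_pencil_poly_of_real: "poly (pencil_poly A B) (of_real t) = of_real (det (A + t *\<^sub>R B))"
  unfolding poly_pencil_poly of_real_det by (simp add: algebra_simps)

lemma poly_Re_Im_pencil_poly: "poly (pencil_poly (Re_mat Z) (Im_mat Z)) \<i> = det Z"
proof -
  have "(\<chi> i j. of_real (Re_mat Z $ i $ j) + \<i> * of_real (Im_mat Z $ i $ j)) = Z"
    by (simp add: vec_eq_iff Re_mat_def Im_mat_def complex_eq_iff)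
  then show ?thesis
    by (simp add: poly_pencil_poly)
qed

lemma integral_det_eq_lagrange_sum:
  fixes Z :: "'b \<Rightarrow> complex^'n^'n" and R :: "real set"
  assumes "finite R" "CARD('n) < card R"
    and "\<And>t. t \<in> R \<Longrightarrow> integrable M (\<lambda>\<theta>. det (Re_mat (Z \<theta>) + t *\<^sub>R Im_mat (Z \<theta>)))"
  shows "(LINT \<theta>|M. det (Z \<theta>)) = (\<Sum>t\<in>R.
      of_real (LINT \<theta>|M. det (Re_mat (Z \<theta>) + t *\<^sub>R Im_mat (Z \<theta>))) *
      poly (lagrange_basis (of_real ` R) (of_real t)) \<i>)"
proof -
  have inj: "inj_on complex_of_real R"
    by (simp add: inj_on_def)
  have pointwise: "det (Z \<theta>) = (\<Sum>t\<in>R. of_real (det (Re_mat (Z \<theta>) + t *\<^sub>R Im_mat (Z \<theta>))) *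
      poly (lagrange_basis (of_real ` R) (of_real t)) \<i>)" for \<theta>
  proof -
    have "det (Z \<theta>) = poly (pencil_poly (Re_mat (Z \<theta>)) (Im_mat (Z \<theta>))) \<i>"
      by (simp add: poly_Re_Im_pencil_poly)
    also have "\<dots> = (\<Sum>x\<in>of_real ` R. poly (pencil_poly (Re_mat (Z \<theta>)) (Im_mat (Z \<theta>))) x *
        poly (lagrange_basis (of_real ` R) x) \<i>)"
      using degree_pencil_poly[of "Re_mat (Z \<theta>)" "Im_mat (Z \<theta>)", where 'a = complex]
        assms(1,2) card_image[OF inj]
      by (intro lagrange_interpolation) auto
    also have "\<dots> = (\<Sum>t\<in>R. of_real (det (Re_mat (Z \<theta>) + t *\<^sub>R Im_mat (Z \<theta>))) *
        poly (lagrange_basis (of_real ` R) (of_real t)) \<i>)"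
      by (simp add: sum.reindex[OF inj] poly_pencil_poly_of_real)
    finally show ?thesis .
  qed
  have "(LINT \<theta>|M. det (Z \<theta>)) = (LINT \<theta>|M. (\<Sum>t\<in>R.
      of_real (det (Re_mat (Z \<theta>) + t *\<^sub>R Im_mat (Z \<theta>))) *
      poly (lagrange_basis (of_real ` R) (of_real t)) \<i>))"
    by (simp only: pointwise)
  also have "\<dots> = (\<Sum>t\<in>R. LINT \<theta>|M.
      of_real (det (Re_mat (Z \<theta>) + t *\<^sub>R Im_mat (Z \<theta>))) *
      poly (lagrange_basis (of_real ` R) (of_real t)) \<i>)"
    by (intro Bochner_Integration.integral_sum integrable_mult_left integrable_of_real assms(3))
  finally show ?thesis
    by simp
qed

lemma norm_integral_det_le_lagrange_sum:
  fixes Z :: "'b \<Rightarrow> complex^'n^'n" and R :: "real set"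
  assumes "finite R" "CARD('n) < card R"
    and "\<And>t. t \<in> R \<Longrightarrow> integrable M (\<lambda>\<theta>. det (Re_mat (Z \<theta>) + t *\<^sub>R Im_mat (Z \<theta>)))"
  shows "norm (LINT \<theta>|M. det (Z \<theta>)) \<le> (\<Sum>t\<in>R.
      \<bar>LINT \<theta>|M. det (Re_mat (Z \<theta>) + t *\<^sub>R Im_mat (Z \<theta>))\<bar> *
      norm (poly (lagrange_basis (of_real ` R) (of_real t)) \<i>))"
proof -
  have "norm (LINT \<theta>|M. det (Z \<theta>)) \<le> (\<Sum>t\<in>R.
      norm (of_real (LINT \<theta>|M. det (Re_mat (Z \<theta>) + t *\<^sub>R Im_mat (Z \<theta>))) *
      poly (lagrange_basis (of_real ` R) (of_real t)) \<i>))"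
    by (subst integral_det_eq_lagrange_sum[OF assms(1,2)]) (simp_all add: assms(3) norm_sum)
  then show ?thesis
    by (simp add: norm_mult)
qed

lemma exists_ge_inverse_one_plus_sum:
  fixes a b :: "'i \<Rightarrow> real"
  assumes "finite R" "\<And>t. t \<in> R \<Longrightarrow> 0 \<le> b t" "1 \<le> (\<Sum>t\<in>R. a t * b t)"
  shows "\<exists>t\<in>R. 1 / (1 + (\<Sum>t\<in>R. b t)) \<le> a t"
proof (rule ccontr)
  define c where "c = 1 / (1 + (\<Sum>t\<in>R. b t))"
  have "0 \<le> (\<Sum>t\<in>R. b t)"
    using assms(2) by (rule sum_nonneg)
  then have "c * (\<Sum>t\<in>R. b t) < 1"
    by (simp add: c_def field_simps)
  assume "\<not> ?thesis"
  then have "(\<Sum>t\<in>R. a t * b t) \<le> (\<Sum>t\<in>R. c * b t)"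
    using assms(2) by (intro sum_mono mult_right_mono) (auto simp: c_def)
  then show False
    using assms(3) \<open>c * (\<Sum>t\<in>R. b t) < 1\<close> by (simp add: sum_distrib_left)
qed

theorem lemma6:
  "\<exists>C>0. \<forall>(d::nat) (Z :: (nat \<Rightarrow> real) \<Rightarrow> complex^'n^'n).
     torus_continuous d Z \<longrightarrow>
     (\<forall>\<theta>\<in>PiE {..<d} (\<lambda>_. UNIV). invertible (Z \<theta>)) \<longrightarrow>
     norm (LINT \<theta>|torus_measure d. det (Z \<theta>)) = 1 \<longrightarrow>
     (\<exists>lam::real\<in>{-1..1}.
        \<bar>LINT \<theta>|torus_measure d. det (Re_mat (Z \<theta>) + lam *\<^sub>R Im_mat (Z \<theta>))\<bar> \<ge> C)"
proof -
  define R where "R = (\<lambda>k. real k / real (Suc CARD('n))) ` {..CARD('n)}"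
  define w where "w t = poly (lagrange_basis (complex_of_real ` R) (of_real t)) \<i>" for t
  have R: "finite R" "CARD('n) < card R"
    by (auto simp: R_def card_image inj_on_def)
  have "R \<subseteq> {-1..1}"
    by (auto simp: R_def field_simps)
  have "1 / (1 + (\<Sum>t\<in>R. norm (w t))) > 0"
    by (simp add: add_pos_nonneg sum_nonneg)
  moreover have "\<exists>t\<in>R. 1 / (1 + (\<Sum>t\<in>R. norm (w t))) \<le>
      \<bar>LINT \<theta>|torus_measure d. det (Re_mat (Z \<theta>) + t *\<^sub>R Im_mat (Z \<theta>))\<bar>"
    if "torus_continuous d Z" and "norm (LINT \<theta>|torus_measure d. det (Z \<theta>)) = 1"
    for d and Z :: "(nat \<Rightarrow> real) \<Rightarrow> complex^'n^'n"
  proof (rule exists_ge_inverse_one_plus_sum[OF R(1)])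
    show "1 \<le> (\<Sum>t\<in>R. \<bar>LINT \<theta>|torus_measure d.
        det (Re_mat (Z \<theta>) + t *\<^sub>R Im_mat (Z \<theta>))\<bar> * norm (w t))"
      using norm_integral_det_le_lagrange_sum[OF R integrable_torus_measure_det_Re_Im[OF that(1)]]
      unfolding w_def that(2) .
  qed simp
  ultimately show ?thesis
    using \<open>R \<subseteq> {-1..1}\<close> by blast
qed

end
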